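(* Let $n\ge 2$ and let $X_1,\dots,X_n$ be real-valued (possibly dependent) random variables with order statistics $X_{1:n}\le\cdots\le X_{n:n}$. Suppose one of the following holds: (A) the distribution function of $X_{n:n}$ has infinite upper endpoint, $X_{n:n}\in\mathrm{GMDA}(h)$ for some positive function $h$, and $$\lim_{x\to\infty}\frac{\mathbb{P}(|X_i|>t h(x),X_j>x)}{\mathbb{P}(X_{n:n}>x)}=0\ \text{for all }1\le i\ne j\le n\text{ and all }t>0,\qquad(\ast)$$ $$\lim_{x\to\infty}\frac{\mathbb{P}(X_i>Lh(x),X_j>Lh(x))}{\mathbb{P}(X_{n:n}>x)}=0\ \text{for all }1\le i<j\le n\text{ and some }L>0;\qquad(\ast\ast)$$ (B) $X_{n:n}\in\mathcal{L}$ and there exists $h\in\mathcal{H}_{X_{n:n}}$ such that $(\ast)$ and $(\ast\ast)$ hold; (C) $X_{n:n}\in\mathcal{L}\cap\mathcal{D}$ and there exists a dominatedly varying $h\in\mathcal{H}_{X_{n:n}}$ such that $(\ast)$ holds. Then for any $0<a\le b<\infty$ and $0\le d<\infty$, $$\mathbb{P}\Big(\sum_{i=0}^{n-1}c_iX_{n-i:n}>x\Big)\sim\mathbb{P}(c_0X_{n:n}>x)\sim\sum_{i=1}^n\mathbb{P}(c_0X_i>x),\qquad x\to\infty,$$ uniformly for $(c_0,c_1,\dots,c_{n-1})\in[a,b]\times[0,d]^{n-1}$ (i.e. the suprema over this set of the absolute differences of the ratios of any two of these quantities from $1$ tend to $0$).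
   Context: Real-valued random variables are assumed not to be concentrated on $(-\infty,0]$. For a distribution function $F$, $\overline{F}=1-F$ and $x_F=\sup\{x:F(x)<1\}$. $F\in\mathrm{GMDA}(h)$ (Gumbel max-domain of attraction) means $\lim_{x\to x_F}\overline{F}(x+yh(x))/\overline{F}(x)=e^{-y}$ for all $y\in\mathbb{R}$. $F\in\mathcal{L}$ (long-tailed) means $\overline{F}(x)>0$ for all $x\ge0$ and $\overline{F}(x+y)\sim\overline{F}(x)$ for every $y\in\mathbb{R}$. $F\in\mathcal{D}$ means $\overline{F}$ is dominatedly varying. A positive function $g$ is dominatedly varying if $0<\liminf_{x\to\infty}g(xy)/g(x)\le\limsup_{x\to\infty}g(xy)/g(x)<\infty$ for every $y>0$. For $F\in\mathcal{L}$, $\mathcal{H}_F$ is the set of eventually positive $h$ with (i) $h(x)=o(x)$; (ii) $\overline{F}(x+yh(x))\sim\overline{F}(x)$ for all $y\in\mathbb{R}$; (iii) $\limsup_{x\to\infty}h(x+yh(x))/h(x)<\infty$ for all $y\in\mathbb{R}$. A random variable is said to belong to a class if its distribution function does. $a(x)\sim b(x)$ means $a(x)/b(x)\to1$ as $x\to\infty$. *)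

theory Defs
  imports "HOL-Probability.Probability"
begin

definition ordstat :: "(nat \<Rightarrow> 'a \<Rightarrow> real) \<Rightarrow> nat \<Rightarrow> nat \<Rightarrow> 'a \<Rightarrow> real" where
  "ordstat X n k w = sort (map (\<lambda>i. X i w) [1..<n+1]) ! (k - 1)"

definition upper_endpoint :: "(real \<Rightarrow> real) \<Rightarrow> ereal" where
  "upper_endpoint F = Sup {ereal x | x. F x < 1}"

definition GMDA :: "(real \<Rightarrow> real) \<Rightarrow> (real \<Rightarrow> real) \<Rightarrow> bool" where
  "GMDA F h \<longleftrightarrow>
     (\<forall>y::real. ((\<lambda>x. (1 - F (x + y * h x)) / (1 - F x)) \<longlongrightarrow> exp (- y))
        (if upper_endpoint F = \<infinity> then at_top
         else at_left (real_of_ereal (upper_endpoint F))))"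

definition long_tailed :: "(real \<Rightarrow> real) \<Rightarrow> bool" where
  "long_tailed F \<longleftrightarrow> (\<forall>x\<ge>0. 1 - F x > 0) \<and>
     (\<forall>y::real. ((\<lambda>x. (1 - F (x + y)) / (1 - F x)) \<longlongrightarrow> 1) at_top)"

definition dominatedly_varying :: "(real \<Rightarrow> real) \<Rightarrow> bool" where
  "dominatedly_varying g \<longleftrightarrow> (\<forall>\<^sub>F x in at_top. g x > 0) \<and>
     (\<forall>y>0. 0 < Liminf at_top (\<lambda>x. ereal (g (x * y) / g x)) \<and>
            Limsup at_top (\<lambda>x. ereal (g (x * y) / g x)) < \<infinity>)"

definition class_D :: "(real \<Rightarrow> real) \<Rightarrow> bool" where
  "class_D F \<longleftrightarrow> dominatedly_varying (\<lambda>x. 1 - F x)"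

definition H_class :: "(real \<Rightarrow> real) \<Rightarrow> (real \<Rightarrow> real) set" where
  "H_class F = {h. (\<forall>\<^sub>F x in at_top. h x > 0) \<and>
     ((\<lambda>x. h x / x) \<longlongrightarrow> 0) at_top \<and>
     (\<forall>y::real. ((\<lambda>x. (1 - F (x + y * h x)) / (1 - F x)) \<longlongrightarrow> 1) at_top) \<and>
     (\<forall>y::real. Limsup at_top (\<lambda>x. ereal (h (x + y * h x) / h x)) < \<infinity>)}"

end

theory Submission
  imports Defs
begin

text \<open>
  On the event that the weighted sum exceeds x = c0 y, either the maximum alone exceeds y up
  to a shift of order h(y), which changes its tail only by a factor close to 1, or two
  coordinates are simultaneously large, which (\<ast>) and (\<ast>\<ast>) make negligible against
  P(X_{n:n} > y). The lower order statistics enter with weights at most d \<le> c0 (d/a + 1),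
  which makes all estimates uniform in the coefficients. Negligibility of joint exceedances
  also gives P(X_{n:n} > y) \<sim> \<Sum>i P(X_i > y). Each of (A), (B), (C) provides a tail that is
  flat on the scale h and a threshold g above which two coordinates rarely lie together:
  g = L h in (A) and (B), and g = \<delta> y in (C), where dominated variation replaces (\<ast>\<ast>).
\<close>

section \<open>Order statistics\<close>

lemma sorted_less_nth_iff_card:
  fixes xs :: "'a::linorder list"
  assumes "sorted xs" "k < length xs"
  shows "t < xs ! k \<longleftrightarrow> length xs - k \<le> card {q. q < length xs \<and> t < xs ! q}"
proof
  assume t: "t < xs ! k"
  have "{k..<length xs} \<subseteq> {q. q < length xs \<and> t < xs ! q}"
  proof
    fix q assume q: "q \<in> {k..<length xs}"
    then have "xs ! k \<le> xs ! q"
      by (intro sorted_nth_mono[OF assms(1)]) auto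
    with t q show "q \<in> {q. q < length xs \<and> t < xs ! q}"
      by simp
  qed
  then have "card {k..<length xs} \<le> card {q. q < length xs \<and> t < xs ! q}"
    by (intro card_mono) auto
  then show "length xs - k \<le> card {q. q < length xs \<and> t < xs ! q}"
    by simp
next
  assume card: "length xs - k \<le> card {q. q < length xs \<and> t < xs ! q}"
  show "t < xs ! k"
  proof (rule ccontr)
    assume "\<not> t < xs ! k"
    have "{q. q < length xs \<and> t < xs ! q} \<subseteq> {Suc k..<length xs}"
    proof
      fix q assume q: "q \<in> {q. q < length xs \<and> t < xs ! q}"
      have "k < q"
      proof (rule ccontr)
        assume "\<not> k < q"
        then have "xs ! q \<le> xs ! k"
          using assms(2) by (intro sorted_nth_mono[OF assms(1)]) auto
        with q \<open>\<not> t < xs ! k\<close> show False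
          by (blast intro: less_le_trans)
      qed
      with q show "q \<in> {Suc k..<length xs}"
        by simp
    qed
    then have "card {q. q < length xs \<and> t < xs ! q} \<le> card {Suc k..<length xs}"
      by (intro card_mono) auto
    with card assms(2) show False
      by simp
  qed
qed

lemma less_ordstat_iff_card:
  assumes "1 \<le> k" "k \<le> n"
  shows "t < ordstat X n k w \<longleftrightarrow> n - k + 1 \<le> card {i\<in>{1..n}. t < X i w}"
proof -
  define xs where "xs = map (\<lambda>i. X i w) [1..<n+1]"
  have "card {i\<in>{1..n}. t < X i w} = length (filter (\<lambda>v. t < v) xs)"
  proof -
    have "length (filter (\<lambda>v. t < v) xs) = card ({i. t < X i w} \<inter> set [1..<n+1])"
      unfolding xs_def filter_map by (simp add: comp_def distinct_length_filter)
    also have "{i. t < X i w} \<inter> set [1..<n+1] = {i\<in>{1..n}. t < X i w}"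
      by auto
    finally show ?thesis ..
  qed
  also have "\<dots> = length (filter (\<lambda>v. t < v) (sort xs))"
    by (metis mset_filter mset_sort size_mset)
  also have "\<dots> = card {q. q < n \<and> t < sort xs ! q}"
    by (simp add: length_filter_conv_card xs_def)
  finally have card_eq: "card {i\<in>{1..n}. t < X i w} = card {q. q < n \<and> t < sort xs ! q}" .
  have "t < ordstat X n k w \<longleftrightarrow> n - (k - 1) \<le> card {q. q < n \<and> t < sort xs ! q}"
    using sorted_less_nth_iff_card[of "sort xs" "k - 1" t] assms
    by (simp add: ordstat_def xs_def)
  also have "n - (k - 1) = n - k + 1"
    using assms by simp
  finally show ?thesis
    by (simp only: card_eq)
qed

lemma less_max_ordstat_iff:
  assumes "1 \<le> n"
  shows "t < ordstat X n n w \<longleftrightarrow> (\<exists>i\<in>{1..n}. t < X i w)"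
proof -
  have "t < ordstat X n n w \<longleftrightarrow> {i\<in>{1..n}. t < X i w} \<noteq> {}"
    using less_ordstat_iff_card[of n n t X w] assms by (simp add: Suc_le_eq card_gt_0_iff)
  then show ?thesis
    by blast
qed

lemma le_max_ordstat:
  assumes "i \<in> {1..n}"
  shows "X i w \<le> ordstat X n n w"
proof -
  have "\<not> ordstat X n n w < X i w"
    using less_max_ordstat_iff[of n "ordstat X n n w" X w] assms by auto
  then show ?thesis
    by simp
qed

lemma max_ordstat_attained:
  assumes "1 \<le> n"
  obtains j where "j \<in> {1..n}" "ordstat X n n w = X j w"
proof -
  have "ordstat X n n w \<in> set (sort (map (\<lambda>i. X i w) [1..<n+1]))"
    unfolding ordstat_def using assms by (intro nth_mem) simp
  then show ?thesis
    using that by force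
qed

lemma sum_ordstat:
  "(\<Sum>k=1..n. f (ordstat X n k w)) = (\<Sum>i=1..n. f (X i w) :: real)"
proof -
  define xs where "xs = map (\<lambda>i. X i w) [1..<n+1]"
  have len: "length (sort xs) = n"
    by (simp add: xs_def)
  have "(\<Sum>k=1..n. f (ordstat X n k w)) = (\<Sum>q<n. f (sort xs ! q))"
    unfolding ordstat_def xs_def[symmetric]
    by (rule sum.reindex_bij_witness[of _ Suc "\<lambda>k. k - 1"]) auto
  also have "\<dots> = sum_list (map f (sort xs))"
    using len by (simp add: sum_list_sum_nth atLeast0LessThan)
  also have "\<dots> = sum_list (map f xs)"
    by (metis mset_map mset_sort sum_mset_sum_list)
  also have "\<dots> = (\<Sum>i\<in>set [1..<n+1]. f (X i w))"
    unfolding xs_def map_map comp_def by (rule sum_list_distinct_conv_sum_set) simp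
  also have "set [1..<n+1] = {1..n}"
    by auto
  finally show ?thesis .
qed

lemma sum_ordstat_below_max:
  assumes "j \<in> {1..n}" "ordstat X n n w = X j w"
  shows "(\<Sum>k\<in>{1..<n}. f (ordstat X n k w)) = (\<Sum>i\<in>{1..n}-{j}. f (X i w) :: real)"
proof -
  have "{1..n} = insert n {1..<n}"
    using assms(1) by auto
  then show ?thesis
    using sum_ordstat[of f X n w] assms by (simp add: sum_diff1)
qed

lemma borel_measurable_ordstat:
  assumes "\<And>i. i \<in> {1..n} \<Longrightarrow> X i \<in> borel_measurable M" "1 \<le> k" "k \<le> n"
  shows "(\<lambda>w. ordstat X n k w) \<in> borel_measurable M"
  unfolding borel_measurable_iff_greater
proof
  fix t :: real
  define \<I> where "\<I> = {I. I \<subseteq> {1..n} \<and> card I = n - k + 1}"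
  have "{w \<in> space M. t < ordstat X n k w} = (\<Union>I\<in>\<I>. \<Inter>i\<in>I. {w \<in> space M. t < X i w})"
  proof (intro set_eqI iffI)
    fix w assume w: "w \<in> {w \<in> space M. t < ordstat X n k w}"
    then have "n - k + 1 \<le> card {i\<in>{1..n}. t < X i w}"
      using less_ordstat_iff_card[OF assms(2,3), of t X w] by simp
    then obtain I where I: "I \<subseteq> {i\<in>{1..n}. t < X i w}" "card I = n - k + 1"
      using obtain_subset_with_card_n by metis
    then have "I \<in> \<I>"
      by (auto simp: \<I>_def)
    with I w show "w \<in> (\<Union>I\<in>\<I>. \<Inter>i\<in>I. {w \<in> space M. t < X i w})"
      by blast
  next
    fix w assume "w \<in> (\<Union>I\<in>\<I>. \<Inter>i\<in>I. {w \<in> space M. t < X i w})"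
    then obtain I where I: "I \<in> \<I>" "\<And>i. i \<in> I \<Longrightarrow> w \<in> space M \<and> t < X i w"
      by auto
    then have "I \<noteq> {}" "I \<subseteq> {i\<in>{1..n}. t < X i w}"
      by (auto simp: \<I>_def)
    then show "w \<in> {w \<in> space M. t < ordstat X n k w}"
      using I card_mono[of "{i\<in>{1..n}. t < X i w}" I] less_ordstat_iff_card[OF assms(2,3), of t X w]
      by (auto simp: \<I>_def)
  qed
  moreover have "finite \<I>"
    by (rule finite_subset[of _ "Pow {1..n}"]) (auto simp: \<I>_def)
  then have "(\<Union>I\<in>\<I>. \<Inter>i\<in>I. {w \<in> space M. t < X i w}) \<in> sets M"
  proof (rule sets.finite_UN)
    fix I assume I: "I \<in> \<I>"
    then have "finite I" "I \<noteq> {}" "I \<subseteq> {1..n}"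
      by (auto simp: \<I>_def intro: finite_subset)
    then show "(\<Inter>i\<in>I. {w \<in> space M. t < X i w}) \<in> sets M"
      using assms(1) unfolding borel_measurable_iff_greater by (intro sets.finite_INT) auto
  qed
  ultimately show "{w \<in> space M. t < ordstat X n k w} \<in> sets M"
    by simp
qed

lemma weighted_ordstat_bounds:
  fixes c :: "nat \<Rightarrow> real"
  assumes j: "j \<in> {1..n}" "ordstat X n n w = X j w"
    and c: "\<forall>i\<in>{1..<n}. 0 \<le> c i \<and> c i \<le> d"
  shows "(\<Sum>i<n. c i * ordstat X n (n - i) w) \<le> c 0 * X j w + d * (\<Sum>i\<in>{1..n}-{j}. max 0 (X i w))"
    and "c 0 * X j w - d * (\<Sum>i\<in>{1..n}-{j}. \<bar>X i w\<bar>) \<le> (\<Sum>i<n. c i * ordstat X n (n - i) w)"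
proof -
  let ?o = "\<lambda>k. ordstat X n k w"
  have "{..<n} = insert 0 {1..<n}"
    using j(1) by auto
  then have split: "(\<Sum>i<n. c i * ?o (n - i)) = c 0 * X j w + (\<Sum>i\<in>{1..<n}. c i * ?o (n - i))"
    using j(2) by simp
  have lower: "(\<Sum>i\<in>{1..<n}. g (?o (n - i))) = (\<Sum>i\<in>{1..n}-{j}. g (X i w))"
    for g :: "real \<Rightarrow> real"
  proof -
    have "(\<Sum>i\<in>{1..<n}. g (?o (n - i))) = (\<Sum>k\<in>{1..<n}. g (?o k))"
      by (rule sum.reindex_bij_witness[of _ "\<lambda>k. n - k" "\<lambda>i. n - i"]) auto
    then show ?thesis
      using sum_ordstat_below_max[OF j] by simp
  qed
  have "(\<Sum>i\<in>{1..<n}. c i * ?o (n - i)) \<le> (\<Sum>i\<in>{1..<n}. d * max 0 (?o (n - i)))"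
  proof (rule sum_mono)
    fix i assume "i \<in> {1..<n}"
    then have "0 \<le> c i" "c i \<le> d"
      using c by auto
    then show "c i * ?o (n - i) \<le> d * max 0 (?o (n - i))"
      by (meson max.cobounded1 max.cobounded2 mult_left_mono mult_right_mono order_trans)
  qed
  also have "\<dots> = d * (\<Sum>i\<in>{1..n}-{j}. max 0 (X i w))"
    using lower[of "\<lambda>v. max 0 v"] by (simp add: sum_distrib_left[symmetric])
  finally show "(\<Sum>i<n. c i * ?o (n - i)) \<le> c 0 * X j w + d * (\<Sum>i\<in>{1..n}-{j}. max 0 (X i w))"
    using split by linarith
  have "- (d * (\<Sum>i\<in>{1..n}-{j}. \<bar>X i w\<bar>)) = (\<Sum>i\<in>{1..<n}. - (d * \<bar>?o (n - i)\<bar>))"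
    using lower[of "\<lambda>v. \<bar>v\<bar>"] by (simp add: sum_distrib_left[symmetric] sum_negf)
  also have "\<dots> \<le> (\<Sum>i\<in>{1..<n}. c i * ?o (n - i))"
  proof (rule sum_mono)
    fix i assume "i \<in> {1..<n}"
    then have "0 \<le> c i" "c i \<le> d"
      using c by auto
    then have "\<bar>c i * ?o (n - i)\<bar> \<le> d * \<bar>?o (n - i)\<bar>"
      by (simp add: abs_mult mult_right_mono)
    then show "- (d * \<bar>?o (n - i)\<bar>) \<le> c i * ?o (n - i)"
      by linarith
  qed
  finally show "c 0 * X j w - d * (\<Sum>i\<in>{1..n}-{j}. \<bar>X i w\<bar>) \<le> (\<Sum>i<n. c i * ?o (n - i))"
    using split by linarith
qed

lemma exists_gt_of_sum_gt:
  fixes f :: "nat \<Rightarrow> real"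
  assumes "finite S" "card S \<le> m" "0 < m" "0 \<le> u" "u < sum f S"
  shows "\<exists>i\<in>S. u / m < f i"
proof (rule ccontr)
  assume "\<not> ?thesis"
  then have "\<And>i. i \<in> S \<Longrightarrow> f i \<le> u / m"
    by (simp add: not_less)
  then have "sum f S \<le> card S * (u / m)"
    by (rule sum_bounded_above)
  also have "\<dots> \<le> m * (u / m)"
    using assms(2,4) by (intro mult_right_mono) auto
  finally show False
    using assms(3,5) by simp
qed

lemma weighted_ordstat_gt_cases:
  fixes c :: "nat \<Rightarrow> real"
  assumes S: "c 0 * y < (\<Sum>i<n. c i * ordstat X n (n - i) w)"
    and "1 \<le> n" "0 < c 0" "\<forall>i\<in>{1..<n}. 0 \<le> c i \<and> c i \<le> d" "d \<le> c 0 * \<kappa>"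
    and "0 < \<kappa>" "0 \<le> g" "0 \<le> u"
  shows "y - u < ordstat X n n w \<or>
    (\<exists>i\<in>{1..n}. \<exists>j\<in>{1..n}. i \<noteq> j \<and>
      (g < X i w \<and> g < X j w \<or> u / (\<kappa> * n) < \<bar>X i w\<bar> \<and> y - \<kappa> * n * g < X j w))"
proof -
  obtain j where j: "j \<in> {1..n}" "ordstat X n n w = X j w"
    using max_ordstat_attained[OF assms(2)] .
  define B where "B = (\<Sum>i\<in>{1..n}-{j}. max 0 (X i w))"
  have "0 \<le> B"
    unfolding B_def by (rule sum_nonneg) simp
  then have "d * B \<le> c 0 * \<kappa> * B"
    using assms(5) by (rule mult_right_mono[rotated])
  then have "c 0 * y < c 0 * (X j w + \<kappa> * B)"
    using S weighted_ordstat_bounds(1)[OF j assms(4)] unfolding B_def[symmetric]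
    by (simp add: algebra_simps)
  then have y: "y < X j w + \<kappa> * B"
    using assms(3) by simp
  have card: "card ({1..n}-{j}) \<le> n"
    using card_Diff1_le[of "{1..n}" j] by simp
  \<comment> \<open>if no other coordinate exceeds g, a large B forces one of them above u/(\<kappa> n)\<close>
  consider "\<kappa> * B \<le> u" | "\<exists>i\<in>{1..n}-{j}. g < X i w" | "u < \<kappa> * B" "\<forall>i\<in>{1..n}-{j}. X i w \<le> g"
    by (meson not_le)
  then show ?thesis
  proof cases
    case 1
    then have "y - u < ordstat X n n w"
      using y j(2) by linarith
    then show ?thesis
      by blast
  next
    case 2
    then obtain i where "i \<in> {1..n}-{j}" "g < X i w"
      by blast
    moreover have "X i w \<le> X j w"
      using le_max_ordstat[of i n X w] j \<open>i \<in> {1..n}-{j}\<close> by simp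
    ultimately have "i \<noteq> j" "g < X i w" "g < X j w"
      by auto
    then show ?thesis
      using \<open>i \<in> {1..n}-{j}\<close> j(1) by (intro disjI2 bexI[of _ i] bexI[of _ j]) auto
  next
    case 3
    have "B \<le> (\<Sum>i\<in>{1..n}-{j}. g)"
      unfolding B_def using 3(2) assms(7) by (intro sum_mono) simp
    also have "\<dots> \<le> n * g"
      using card assms(7) by (simp add: mult_right_mono)
    finally have "\<kappa> * B \<le> \<kappa> * n * g"
      using assms(6) by (simp add: mult.assoc)
    then have "y - \<kappa> * n * g < X j w"
      using y by linarith
    have "\<exists>i\<in>{1..n}-{j}. u / \<kappa> / n < max 0 (X i w)"
    proof (rule exists_gt_of_sum_gt)
      show "u / \<kappa> < (\<Sum>i\<in>{1..n}-{j}. max 0 (X i w))"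
        using 3(1) assms(6) by (simp add: B_def divide_less_eq mult.commute)
    qed (use card assms(2,6,8) in auto)
    then obtain i where i: "i \<in> {1..n}-{j}" "u / \<kappa> / n < max 0 (X i w)"
      by blast
    have "max 0 (X i w) \<le> \<bar>X i w\<bar>"
      by simp
    with i(2) have "u / (\<kappa> * n) < \<bar>X i w\<bar>"
      by (metis divide_divide_eq_left less_le_trans)
    with \<open>y - \<kappa> * n * g < X j w\<close> show ?thesis
      using i(1) j(1) by (intro disjI2 bexI[of _ i] bexI[of _ j]) auto
  qed
qed

lemma max_ordstat_gt_cases:
  fixes c :: "nat \<Rightarrow> real"
  assumes M: "y + u < ordstat X n n w"
    and "1 \<le> n" "0 < c 0" "\<forall>i\<in>{1..<n}. 0 \<le> c i \<and> c i \<le> d" "d \<le> c 0 * \<kappa>"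
    and "0 < \<kappa>" "0 \<le> u"
  shows "c 0 * y < (\<Sum>i<n. c i * ordstat X n (n - i) w) \<or>
    (\<exists>i\<in>{1..n}. \<exists>j\<in>{1..n}. i \<noteq> j \<and> u / (\<kappa> * n) < \<bar>X i w\<bar> \<and> y < X j w)"
proof -
  obtain j where j: "j \<in> {1..n}" "ordstat X n n w = X j w"
    using max_ordstat_attained[OF assms(2)] .
  define A where "A = (\<Sum>i\<in>{1..n}-{j}. \<bar>X i w\<bar>)"
  have "0 \<le> A"
    unfolding A_def by (rule sum_nonneg) simp
  then have "d * A \<le> c 0 * \<kappa> * A"
    using assms(5) by (rule mult_right_mono[rotated])
  then have S: "c 0 * (X j w - \<kappa> * A) \<le> (\<Sum>i<n. c i * ordstat X n (n - i) w)"
    using weighted_ordstat_bounds(2)[OF j assms(4)] unfolding A_def[symmetric]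
    by (simp add: algebra_simps)
  show ?thesis
  proof (cases "\<kappa> * A \<le> u")
    case True
    then have "c 0 * y < c 0 * (X j w - \<kappa> * A)"
      using M j(2) assms(3) by simp
    with S show ?thesis
      by linarith
  next
    case False
    have "\<exists>i\<in>{1..n}-{j}. u / \<kappa> / n < \<bar>X i w\<bar>"
    proof (rule exists_gt_of_sum_gt)
      show "u / \<kappa> < (\<Sum>i\<in>{1..n}-{j}. \<bar>X i w\<bar>)"
        using False assms(6) by (simp add: A_def divide_less_eq mult.commute)
    qed (use card_Diff1_le[of "{1..n}" j] assms(2,6,7) in auto)
    then obtain i where i: "i \<in> {1..n}-{j}" "u / \<kappa> / n < \<bar>X i w\<bar>"
      by blast
    then have "u / (\<kappa> * n) < \<bar>X i w\<bar>"
      by (metis divide_divide_eq_left)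
    moreover have "y < X j w"
      using M j(2) assms(7) by simp
    ultimately show ?thesis
      using i(1) j(1) by (intro disjI2 bexI[of _ i] bexI[of _ j]) auto
  qed
qed

lemma filterlim_scaled_at_top: "0 < (\<delta>::real) \<Longrightarrow> filterlim (\<lambda>y. \<delta> * y) at_top at_top"
  by (rule filterlim_tendsto_pos_mult_at_top[OF tendsto_const _ filterlim_ident])

lemma (in prob_space) prob_le_prob_plus_pairs:
  assumes "E \<subseteq> A \<union> (\<Union>i\<in>I. \<Union>j\<in>I-{i}. B i j)" "finite I" "A \<in> events"
    and "\<And>i j. i \<in> I \<Longrightarrow> j \<in> I \<Longrightarrow> B i j \<in> events"
  shows "prob E \<le> prob A + (\<Sum>i\<in>I. \<Sum>j\<in>I-{i}. prob (B i j))"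
proof -
  have B: "(\<Union>i\<in>I. \<Union>j\<in>I-{i}. B i j) \<in> events"
    using assms(2,4) by auto
  have "prob E \<le> prob (A \<union> (\<Union>i\<in>I. \<Union>j\<in>I-{i}. B i j))"
    using assms(1,3) B by (intro finite_measure_mono) auto
  also have "\<dots> \<le> prob A + prob (\<Union>i\<in>I. \<Union>j\<in>I-{i}. B i j)"
    using assms(3) B by (rule measure_Un_le)
  also have "prob (\<Union>i\<in>I. \<Union>j\<in>I-{i}. B i j) \<le> (\<Sum>i\<in>I. prob (\<Union>j\<in>I-{i}. B i j))"
    using assms(2,4) by (intro measure_UNION_le) auto
  also have "\<dots> \<le> (\<Sum>i\<in>I. \<Sum>j\<in>I-{i}. prob (B i j))"
    using assms(2,4) by (intro sum_mono measure_UNION_le) auto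
  finally show ?thesis
    by simp
qed

lemma abs_ratio_sub_one_less:
  fixes P F :: real
  assumes "0 < F" "\<bar>P - F\<bar> \<le> k * F" "k < r"
  shows "\<bar>P / F - 1\<bar> < r"
proof -
  have "\<bar>P / F - 1\<bar> = \<bar>P - F\<bar> / F"
    using assms(1) by (simp add: field_simps)
  also have "\<dots> \<le> k"
    using assms(1,2) by (simp add: divide_le_eq)
  finally show ?thesis
    using assms(3) by linarith
qed

lemma ratios_close_to_one:
  fixes P F G e :: real
  assumes "0 < F" "0 < e" "(1 - e) * F \<le> P" "P \<le> (1 + e) * F" "F \<le> G" "G \<le> (1 + e) * F"
  shows "\<bar>P / F - 1\<bar> < 4 * e" "\<bar>F / G - 1\<bar> < 4 * e" "\<bar>P / G - 1\<bar> < 4 * e"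
proof -
  have G: "0 < G"
    using assms by linarith
  have PF: "\<bar>P - F\<bar> \<le> e * F" and GF: "\<bar>G - F\<bar> \<le> e * F"
    using assms(3-6) by (simp_all add: abs_le_iff algebra_simps)
  have eG: "e * F \<le> e * G"
    using assms(2,5) by simp
  show "\<bar>P / F - 1\<bar> < 4 * e"
    using abs_ratio_sub_one_less[OF assms(1) PF] assms(2) by simp
  have "\<bar>F - G\<bar> \<le> e * G"
    using GF eG by (simp add: abs_minus_commute)
  then show "\<bar>F / G - 1\<bar> < 4 * e"
    using abs_ratio_sub_one_less[OF G] assms(2) by simp
  have "\<bar>P - G\<bar> \<le> (2 * e) * G"
    using PF GF eG by (simp add: abs_le_iff)
  then show "\<bar>P / G - 1\<bar> < 4 * e"
    using abs_ratio_sub_one_less[OF G] assms(2) by simp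
qed

lemma eventually_at_top_divide_uniform:
  fixes a b :: real
  assumes "0 < a" "\<forall>\<^sub>F y in at_top. P y"
  shows "\<forall>\<^sub>F x in at_top. \<forall>c\<in>{a..b}. P (x / c)"
proof -
  obtain Y where Y: "\<And>y. Y \<le> y \<Longrightarrow> P y"
    using assms(2) by (auto simp: eventually_at_top_linorder)
  define m where "m = max b a"
  have m: "0 < m"
    using assms(1) by (simp add: m_def)
  have "P (x / c)" if x: "m * max Y 0 \<le> x" and c: "c \<in> {a..b}" for x c
  proof (rule Y)
    have "0 \<le> m * max Y 0"
      using m by simp
    then have "0 \<le> x"
      using x by linarith
    moreover have "0 < m * c"
      using c m assms(1) by simp
    moreover have "c \<le> m"
      using c by (simp add: m_def)
    ultimately have "x / m \<le> x / c"
      by (intro divide_left_mono)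
    moreover have "max Y 0 \<le> x / m"
      using x by (simp only: pos_le_divide_eq[OF m] mult.commute)
    ultimately show "Y \<le> x / c"
      by simp
  qed
  then show ?thesis
    unfolding eventually_at_top_linorder by blast
qed

lemma le_mult_div_add_one:
  fixes a c d :: real
  assumes "0 < a" "a \<le> c" "0 \<le> d"
  shows "d \<le> c * (d / a + 1)"
proof -
  have "d = a * (d / a)"
    using assms(1) by simp
  also have "\<dots> \<le> c * (d / a)"
    using assms by (intro mult_right_mono) auto
  also have "\<dots> \<le> c * (d / a + 1)"
    using assms by (intro mult_left_mono) auto
  finally show ?thesis .
qed

lemma Limsup_less_infinity_eventually_less:
  assumes "Limsup at_top (\<lambda>x. ereal (f x)) < \<infinity>"
  obtains C where "0 < C" "\<forall>\<^sub>F x in at_top. f x < C"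
proof -
  obtain z where "Limsup at_top (\<lambda>x. ereal (f x)) < ereal z"
    using assms ereal_dense2 by blast
  then have "\<forall>\<^sub>F x in at_top. ereal (f x) < ereal z"
    by (rule Limsup_lessD)
  then have "\<forall>\<^sub>F x in at_top. f x < max z 1"
    by eventually_elim simp
  then show ?thesis
    using that[of "max z 1"] by simp
qed

lemma Liminf_pos_eventually_greater:
  assumes "0 < Liminf at_top (\<lambda>x. ereal (f x))"
  obtains c where "0 < c" "\<forall>\<^sub>F x in at_top. c < f x"
proof -
  obtain z where "0 < ereal z" "ereal z < Liminf at_top (\<lambda>x. ereal (f x))"
    using assms ereal_dense2 by blast
  then show ?thesis
    using that[of z] less_LiminfD by fastforce
qed

lemma eventually_scaled_less_of_sublinear:
  fixes h :: "real \<Rightarrow> real"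
  assumes "((\<lambda>x. h x / x) \<longlongrightarrow> 0) at_top" "0 < \<tau>"
  shows "\<forall>\<^sub>F y in at_top. \<tau> * h y < y"
proof -
  have "\<forall>\<^sub>F y in at_top. h y / y < 1 / \<tau>"
    using order_tendstoD(2)[OF assms(1)] assms(2) by simp
  with eventually_gt_at_top[of 0] show ?thesis
    by eventually_elim (use assms(2) in \<open>simp add: divide_less_eq field_simps\<close>)
qed

section \<open>The tail of the maximum\<close>

locale order_statistics = prob_space M for M :: "'a measure" +
  fixes X :: "nat \<Rightarrow> 'a \<Rightarrow> real" and n :: nat
  assumes two_le_n: "2 \<le> n"
    and random_variable_X [measurable (raw)]: "\<And>i. i \<in> {1..n} \<Longrightarrow> X i \<in> borel_measurable M"
begin

lemma one_le_n: "1 \<le> n"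
  using two_le_n by simp

lemma random_variable_ordstat [measurable (raw)]:
  "1 \<le> k \<Longrightarrow> k \<le> n \<Longrightarrow> (\<lambda>w. ordstat X n k w) \<in> borel_measurable M"
  using borel_measurable_ordstat random_variable_X by blast

lemma random_variable_max_ordstat [measurable]: "(\<lambda>w. ordstat X n n w) \<in> borel_measurable M"
  using one_le_n by (intro random_variable_ordstat) auto

definition max_tail :: "real \<Rightarrow> real" where
  "max_tail y = prob {w \<in> space M. y < ordstat X n n w}"

definition tail_negligible :: "(real \<Rightarrow> real) \<Rightarrow> bool" where
  "tail_negligible f \<longleftrightarrow> ((\<lambda>y. f y / max_tail y) \<longlongrightarrow> 0) at_top"

lemma max_tail_nonneg: "0 \<le> max_tail y"
  by (simp add: max_tail_def)

lemma max_tail_antimono: "x \<le> y \<Longrightarrow> max_tail y \<le> max_tail x"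
  unfolding max_tail_def by (intro finite_measure_mono) auto

definition max_cdf :: "real \<Rightarrow> real" where
  "max_cdf x = prob {w \<in> space M. ordstat X n n w \<le> x}"

lemma one_minus_max_cdf: "1 - max_cdf x = max_tail x"
proof -
  have "{w \<in> space M. ordstat X n n w \<le> x} = space M - {w \<in> space M. x < ordstat X n n w}"
    by auto
  then show ?thesis
    by (simp add: max_cdf_def max_tail_def prob_compl)
qed

lemma max_tail_tendsto_0: "(max_tail \<longlongrightarrow> 0) at_top"
proof -
  define A where "A k = {w \<in> space M. real k < ordstat X n n w}" for k :: nat
  have "(\<lambda>k. prob (A k)) \<longlonglongrightarrow> prob (\<Inter>(range A))"
    by (rule finite_Lim_measure_decseq) (auto simp: A_def monotone_on_def)
  moreover have "\<Inter>(range A) = {}"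
  proof -
    have "w \<notin> A (nat \<lceil>ordstat X n n w\<rceil>)" for w
      unfolding A_def by (simp; linarith)
    then show ?thesis
      by blast
  qed
  ultimately have seq: "(\<lambda>k. max_tail (real k)) \<longlonglongrightarrow> 0"
    by (simp add: A_def max_tail_def)
  show ?thesis
  proof (rule order_tendstoI)
    fix e :: real assume "0 < e"
    then obtain k where "max_tail (real k) < e"
      using order_tendstoD(2)[OF seq] by (auto simp: eventually_sequentially)
    then show "\<forall>\<^sub>F y in at_top. max_tail y < e"
      unfolding eventually_at_top_linorder
      using max_tail_antimono[of "real k"] by (intro exI[of _ "real k"]) (auto intro: le_less_trans)
  next
    fix e :: real assume "e < 0"
    then show "\<forall>\<^sub>F y in at_top. e < max_tail y"
      using max_tail_nonneg less_le_trans by (intro always_eventually) blast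
  qed
qed

lemma tail_negligible_add:
  assumes "tail_negligible f" "tail_negligible g"
  shows "tail_negligible (\<lambda>y. f y + g y)"
  using tendsto_add[OF assms[unfolded tail_negligible_def]]
  by (simp add: tail_negligible_def add_divide_distrib)

lemma tail_negligible_sum:
  assumes "\<And>i. i \<in> I \<Longrightarrow> tail_negligible (f i)"
  shows "tail_negligible (\<lambda>y. \<Sum>i\<in>I. f i y)"
  using tendsto_sum[of I "\<lambda>i y. f i y / max_tail y" "\<lambda>_. 0"] assms
  by (simp add: tail_negligible_def sum_divide_distrib)

lemma tail_negligible_eventually_le:
  assumes "tail_negligible f" "\<forall>\<^sub>F y in at_top. 0 < max_tail y" "0 < e"
  shows "\<forall>\<^sub>F y in at_top. f y \<le> e * max_tail y"
  using order_tendstoD(2)[OF assms(1)[unfolded tail_negligible_def] assms(3)] assms(2)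
  by eventually_elim (simp add: divide_less_eq)

lemma tail_negligible_compose:
  assumes f: "tail_negligible f" and z: "filterlim z at_top at_top"
    and pos: "\<forall>\<^sub>F y in at_top. 0 < max_tail y"
    and K: "\<forall>\<^sub>F y in at_top. max_tail (z y) \<le> K * max_tail y"
    and g: "\<forall>\<^sub>F y in at_top. 0 \<le> g y \<and> g y \<le> f (z y)"
  shows "tail_negligible g"
  unfolding tail_negligible_def
proof (rule tendsto_sandwich[where f = "\<lambda>_. 0"])
  show "\<forall>\<^sub>F y in at_top. 0 \<le> g y / max_tail y"
    using g by eventually_elim (simp add: max_tail_nonneg)
  have "((\<lambda>y. f (z y) / max_tail (z y)) \<longlongrightarrow> 0) at_top"
    using filterlim_compose[OF f[unfolded tail_negligible_def] z] by simp
  then show "((\<lambda>y. K * (f (z y) / max_tail (z y))) \<longlongrightarrow> 0) at_top"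
    by (rule tendsto_mult_right_zero)
  have "\<forall>\<^sub>F y in at_top. 0 < max_tail (z y)"
    using eventually_compose_filterlim[OF pos z] .
  then show "\<forall>\<^sub>F y in at_top. g y / max_tail y \<le> K * (f (z y) / max_tail (z y))"
    using pos K g
  proof eventually_elim
    case (elim y)
    then have "g y / max_tail y \<le> f (z y) / max_tail y"
      by (intro divide_right_mono) auto
    also have "\<dots> = f (z y) / max_tail (z y) * (max_tail (z y) / max_tail y)"
      using elim by simp
    also have "\<dots> \<le> f (z y) / max_tail (z y) * K"
      using elim by (intro mult_left_mono) (auto simp: divide_le_eq)
    also have "\<dots> = K * (f (z y) / max_tail (z y))"
      by (rule mult.commute)
    finally show ?case .
  qed
qed simp

definition marginal_tail_sum :: "real \<Rightarrow> real" where
  "marginal_tail_sum y = (\<Sum>i=1..n. prob {w \<in> space M. y < X i w})"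

lemma max_tail_le_marginal_tail_sum: "max_tail y \<le> marginal_tail_sum y"
proof -
  have "{w \<in> space M. y < ordstat X n n w} = (\<Union>i\<in>{1..n}. {w \<in> space M. y < X i w})"
    by (auto simp: less_max_ordstat_iff[OF one_le_n])
  moreover have "prob (\<Union>i\<in>{1..n}. {w \<in> space M. y < X i w}) \<le> marginal_tail_sum y"
    unfolding marginal_tail_sum_def by (rule measure_UNION_le) measurable
  ultimately show ?thesis
    by (simp add: max_tail_def)
qed

lemma marginal_tail_sum_le:
  "marginal_tail_sum y \<le>
    max_tail y + (\<Sum>i=1..n. \<Sum>j\<in>{1..n}-{i}. prob {w \<in> space M. y < X i w \<and> y < X j w})"
proof -
  define E where "E i = {w \<in> space M. y < X i w \<and> (\<forall>j\<in>{1..n}. j \<noteq> i \<longrightarrow> X j w \<le> y)}" for i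
  have E: "E i \<in> events" if "i \<in> {1..n}" for i
  proof -
    have "E i = {w \<in> space M. y < X i w} - (\<Union>j\<in>{1..n}-{i}. {w \<in> space M. y < X j w})"
      by (auto simp: E_def)
    then show ?thesis
      using that by simp measurable
  qed
  have "(\<Sum>i=1..n. prob (E i)) = prob (\<Union>i\<in>{1..n}. E i)"
    using E by (intro finite_measure_finite_Union[symmetric])
      (auto simp: disjoint_family_on_def E_def)
  also have "\<dots> \<le> max_tail y"
    unfolding max_tail_def using E
    by (intro finite_measure_mono) (auto simp: E_def less_max_ordstat_iff[OF one_le_n])
  finally have "(\<Sum>i=1..n. prob (E i)) \<le> max_tail y" .
  moreover have "prob {w \<in> space M. y < X i w} \<le>
      prob (E i) + (\<Sum>j\<in>{1..n}-{i}. prob {w \<in> space M. y < X i w \<and> y < X j w})"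
    if "i \<in> {1..n}" for i
  proof -
    have "prob {w \<in> space M. y < X i w} \<le>
        prob (E i \<union> (\<Union>j\<in>{1..n}-{i}. {w \<in> space M. y < X i w \<and> y < X j w}))"
      using E[OF that] that by (intro finite_measure_mono) (auto simp: E_def)
    also have "\<dots> \<le> prob (E i) + prob (\<Union>j\<in>{1..n}-{i}. {w \<in> space M. y < X i w \<and> y < X j w})"
      using E[OF that] that by (intro measure_Un_le) auto
    also have "\<dots> \<le> prob (E i) + (\<Sum>j\<in>{1..n}-{i}. prob {w \<in> space M. y < X i w \<and> y < X j w})"
      using that by (intro add_left_mono measure_UNION_le) measurable
    finally show ?thesis .
  qed
  then have "marginal_tail_sum y \<le>
      (\<Sum>i=1..n. prob (E i)) + (\<Sum>i=1..n. \<Sum>j\<in>{1..n}-{i}. prob {w \<in> space M. y < X i w \<and> y < X j w})"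
    unfolding marginal_tail_sum_def sum.distrib[symmetric] by (intro sum_mono)
  ultimately show ?thesis
    by linarith
qed

definition star_condition :: "(real \<Rightarrow> real) \<Rightarrow> bool" where
  "star_condition h \<longleftrightarrow> (\<forall>i\<in>{1..n}. \<forall>j\<in>{1..n}. i \<noteq> j \<longrightarrow> (\<forall>t>0.
     tail_negligible (\<lambda>x. prob {w \<in> space M. \<bar>X i w\<bar> > t * h x \<and> X j w > x})))"

definition starstar_condition :: "(real \<Rightarrow> real) \<Rightarrow> bool" where
  "starstar_condition h \<longleftrightarrow> (\<exists>L>0. \<forall>i\<in>{1..n}. \<forall>j\<in>{1..n}. i < j \<longrightarrow>
     tail_negligible (\<lambda>x. prob {w \<in> space M. X i w > L * h x \<and> X j w > L * h x}))"

text \<open>Below the threshold g the lower order statistics, of total weight at most \<kappa>, only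
  shift the maximum by \<kappa> g.\<close>
definition threshold_negligible :: "(real \<Rightarrow> real) \<Rightarrow> real \<Rightarrow> (real \<Rightarrow> real) \<Rightarrow> bool" where
  "threshold_negligible h \<kappa> g \<longleftrightarrow> (\<forall>i\<in>{1..n}. \<forall>j\<in>{1..n}. i \<noteq> j \<longrightarrow>
     tail_negligible (\<lambda>y. prob {w \<in> space M. g y < X i w \<and> g y < X j w}) \<and>
     (\<forall>\<sigma>>0. tail_negligible (\<lambda>y. prob {w \<in> space M. \<sigma> * h y < \<bar>X i w\<bar> \<and> y - \<kappa> * g y < X j w})))"

lemma starstar_condition_pairs:
  assumes "starstar_condition h"
  obtains L where "0 < L" "\<And>i j. i \<in> {1..n} \<Longrightarrow> j \<in> {1..n} \<Longrightarrow> i \<noteq> j \<Longrightarrow>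
    tail_negligible (\<lambda>x. prob {w \<in> space M. X i w > L * h x \<and> X j w > L * h x})"
proof -
  obtain L where L: "0 < L" "\<forall>i\<in>{1..n}. \<forall>j\<in>{1..n}. i < j \<longrightarrow>
      tail_negligible (\<lambda>x. prob {w \<in> space M. X i w > L * h x \<and> X j w > L * h x})"
    using assms unfolding starstar_condition_def by blast
  have "tail_negligible (\<lambda>x. prob {w \<in> space M. X i w > L * h x \<and> X j w > L * h x})"
    if "i \<in> {1..n}" "j \<in> {1..n}" "i \<noteq> j" for i j
  proof (cases "i < j")
    case False
    then have "tail_negligible (\<lambda>x. prob {w \<in> space M. X j w > L * h x \<and> X i w > L * h x})"
      using L that by auto
    then show ?thesis
      by (simp add: conj_commute)
  qed (use L that in auto)
  with L(1) show ?thesis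
    by (rule that)
qed

lemma star_condition_shift:
  assumes star: "star_condition h" and ij: "i \<in> {1..n}" "j \<in> {1..n}" "i \<noteq> j"
    and "0 < \<sigma>" "0 < C" and z: "filterlim z at_top at_top"
    and pos: "\<forall>\<^sub>F y in at_top. 0 < max_tail y"
    and K: "\<forall>\<^sub>F y in at_top. max_tail (z y) \<le> K * max_tail y"
    and hz: "\<forall>\<^sub>F y in at_top. h (z y) \<le> C * h y"
  shows "tail_negligible (\<lambda>y. prob {w \<in> space M. \<sigma> * h y < \<bar>X i w\<bar> \<and> z y < X j w})"
proof (rule tail_negligible_compose[OF _ z pos K])
  have "0 < \<sigma> / C"
    using assms(5,6) by simp
  then show "tail_negligible (\<lambda>x. prob {w \<in> space M. \<sigma> / C * h x < \<bar>X i w\<bar> \<and> x < X j w})"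
    using star ij unfolding star_condition_def by blast
  show "\<forall>\<^sub>F y in at_top. 0 \<le> prob {w \<in> space M. \<sigma> * h y < \<bar>X i w\<bar> \<and> z y < X j w} \<and>
      prob {w \<in> space M. \<sigma> * h y < \<bar>X i w\<bar> \<and> z y < X j w} \<le>
      prob {w \<in> space M. \<sigma> / C * h (z y) < \<bar>X i w\<bar> \<and> z y < X j w}"
    using hz
  proof eventually_elim
    case (elim y)
    have "\<sigma> / C * h (z y) \<le> \<sigma> * h y"
      using mult_left_mono[OF elim, of "\<sigma> / C"] assms(5,6) by simp
    then show ?case
      using ij by (intro conjI measure_nonneg finite_measure_mono) auto
  qed
qed

lemma threshold_negligible_multiple_h:
  assumes star: "star_condition h" and "0 < L" "0 < C"
    and pairs: "\<And>i j. i \<in> {1..n} \<Longrightarrow> j \<in> {1..n} \<Longrightarrow> i \<noteq> j \<Longrightarrow>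
      tail_negligible (\<lambda>x. prob {w \<in> space M. X i w > L * h x \<and> X j w > L * h x})"
    and z: "filterlim (\<lambda>y. y - \<kappa> * (L * h y)) at_top at_top"
    and pos: "\<forall>\<^sub>F y in at_top. 0 < max_tail y"
    and K: "\<forall>\<^sub>F y in at_top. max_tail (y - \<kappa> * (L * h y)) \<le> K * max_tail y"
    and hz: "\<forall>\<^sub>F y in at_top. h (y - \<kappa> * (L * h y)) \<le> C * h y"
  shows "threshold_negligible h \<kappa> (\<lambda>y. L * h y)"
  unfolding threshold_negligible_def
  using pairs star_condition_shift[OF star _ _ _ _ \<open>0 < C\<close> z pos K hz] by auto

lemma max_tail_shift_of_tendsto:
  assumes "((\<lambda>y. max_tail (y + (- \<eta>) * h y) / max_tail y) \<longlongrightarrow> l1) at_top" "l1 < 1 + \<epsilon>"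
    and "((\<lambda>y. max_tail (y + \<eta> * h y) / max_tail y) \<longlongrightarrow> l2) at_top" "1 - \<epsilon> < l2"
    and "\<forall>\<^sub>F y in at_top. 0 < max_tail y"
  shows "\<forall>\<^sub>F y in at_top. max_tail (y - \<eta> * h y) \<le> (1 + \<epsilon>) * max_tail y \<and>
    (1 - \<epsilon>) * max_tail y \<le> max_tail (y + \<eta> * h y)"
  using order_tendstoD(2)[OF assms(1,2)] order_tendstoD(1)[OF assms(3,4)] assms(5)
  by eventually_elim (auto simp: divide_less_eq less_divide_eq less_imp_le)

lemma weighted_ordstat_event_subset:
  assumes "0 < c 0" "\<forall>i\<in>{1..<n}. 0 \<le> c i \<and> c i \<le> d" "d \<le> c 0 * \<kappa>" "0 < \<kappa>" "0 \<le> g" "0 \<le> u"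
  shows "{w \<in> space M. c 0 * y < (\<Sum>i<n. c i * ordstat X n (n - i) w)} \<subseteq>
    {w \<in> space M. y - u < ordstat X n n w} \<union> (\<Union>i\<in>{1..n}. \<Union>j\<in>{1..n}-{i}.
      {w \<in> space M. g < X i w \<and> g < X j w} \<union>
      {w \<in> space M. u / (\<kappa> * n) < \<bar>X i w\<bar> \<and> y - \<kappa> * n * g < X j w})"
proof
  fix w assume w: "w \<in> {w \<in> space M. c 0 * y < (\<Sum>i<n. c i * ordstat X n (n - i) w)}"
  then consider "y - u < ordstat X n n w"
    | i j where "i \<in> {1..n}" "j \<in> {1..n}-{i}"
        "g < X i w \<and> g < X j w \<or> u / (\<kappa> * n) < \<bar>X i w\<bar> \<and> y - \<kappa> * n * g < X j w"
    using weighted_ordstat_gt_cases[OF _ one_le_n assms, where y = y and X = X and w = w] by blast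
  then show "w \<in> {w \<in> space M. y - u < ordstat X n n w} \<union> (\<Union>i\<in>{1..n}. \<Union>j\<in>{1..n}-{i}.
      {w \<in> space M. g < X i w \<and> g < X j w} \<union>
      {w \<in> space M. u / (\<kappa> * n) < \<bar>X i w\<bar> \<and> y - \<kappa> * n * g < X j w})"
    using w by cases blast+
qed

lemma max_ordstat_event_subset:
  assumes "0 < c 0" "\<forall>i\<in>{1..<n}. 0 \<le> c i \<and> c i \<le> d" "d \<le> c 0 * \<kappa>" "0 < \<kappa>" "0 \<le> u"
  shows "{w \<in> space M. y + u < ordstat X n n w} \<subseteq>
    {w \<in> space M. c 0 * y < (\<Sum>i<n. c i * ordstat X n (n - i) w)} \<union>
    (\<Union>i\<in>{1..n}. \<Union>j\<in>{1..n}-{i}. {w \<in> space M. u / (\<kappa> * n) < \<bar>X i w\<bar> \<and> y < X j w})"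
proof
  fix w assume w: "w \<in> {w \<in> space M. y + u < ordstat X n n w}"
  then consider "c 0 * y < (\<Sum>i<n. c i * ordstat X n (n - i) w)"
    | i j where "i \<in> {1..n}" "j \<in> {1..n}-{i}" "u / (\<kappa> * n) < \<bar>X i w\<bar>" "y < X j w"
    using max_ordstat_gt_cases[OF _ one_le_n assms, where y = y and X = X and w = w] by blast
  then show "w \<in> {w \<in> space M. c 0 * y < (\<Sum>i<n. c i * ordstat X n (n - i) w)} \<union>
    (\<Union>i\<in>{1..n}. \<Union>j\<in>{1..n}-{i}. {w \<in> space M. u / (\<kappa> * n) < \<bar>X i w\<bar> \<and> y < X j w})"
    using w by cases blast+
qed

lemma max_tail_pos_of_upper_endpoint:
  assumes "upper_endpoint max_cdf = \<infinity>"
  shows "0 < max_tail x"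
proof (rule ccontr)
  assume "\<not> 0 < max_tail x"
  then have "max_tail x = 0"
    using max_tail_nonneg[of x] by linarith
  then have zero: "max_tail y = 0" if "x \<le> y" for y
    using max_tail_antimono[OF that] max_tail_nonneg[of y] by linarith
  have "Sup {ereal y | y. max_cdf y < 1} \<le> ereal x"
  proof (rule Sup_least)
    fix v assume "v \<in> {ereal y | y. max_cdf y < 1}"
    then obtain y where y: "v = ereal y" "0 < max_tail y"
      by (auto simp: one_minus_max_cdf[symmetric])
    have "\<not> x \<le> y"
      using zero y(2) by fastforce
    with y(1) show "v \<le> ereal x"
      by simp
  qed
  then show False
    using assms unfolding upper_endpoint_def by simp
qed

lemma threshold_negligible_of_starstar:
  assumes star: "star_condition h" and "starstar_condition h" "0 < \<kappa>"
    and pos: "\<forall>\<^sub>F y in at_top. 0 < max_tail y" and "\<forall>\<^sub>F y in at_top. 0 < h y"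
    and sub: "\<And>\<tau>. 0 < \<tau> \<Longrightarrow> \<forall>\<^sub>F y in at_top. \<tau> * h y < y"
    and ratio: "\<And>r. 0 < r \<Longrightarrow> \<exists>K. \<forall>\<^sub>F y in at_top. max_tail (y - r * h y) \<le> K * max_tail y"
    and shift: "\<And>r. 0 < r \<Longrightarrow> filterlim (\<lambda>y. y - r * h y) at_top at_top \<Longrightarrow>
      \<exists>C>0. \<forall>\<^sub>F y in at_top. h (y - r * h y) \<le> C * h y"
  shows "\<exists>g. (\<forall>\<^sub>F y in at_top. 0 \<le> g y) \<and> threshold_negligible h \<kappa> g"
proof -
  obtain L where L: "0 < L" and pairs: "\<And>i j. i \<in> {1..n} \<Longrightarrow> j \<in> {1..n} \<Longrightarrow> i \<noteq> j \<Longrightarrow>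
    tail_negligible (\<lambda>x. prob {w \<in> space M. X i w > L * h x \<and> X j w > L * h x})"
    using starstar_condition_pairs[OF assms(2)] by blast
  have r: "0 < \<kappa> * L"
    using assms(3) L by simp
  have z: "filterlim (\<lambda>y. y - \<kappa> * L * h y) at_top at_top"
  proof (rule filterlim_at_top_mono[OF filterlim_scaled_at_top[of "1 / 2"]])
    show "\<forall>\<^sub>F y in at_top. 1 / 2 * y \<le> y - \<kappa> * L * h y"
      using sub[of "2 * (\<kappa> * L)"] r by (simp add: eventually_mono)
  qed simp
  obtain K where K: "\<forall>\<^sub>F y in at_top. max_tail (y - \<kappa> * L * h y) \<le> K * max_tail y"
    using ratio[OF r] by blast
  obtain C where C: "0 < C" "\<forall>\<^sub>F y in at_top. h (y - \<kappa> * L * h y) \<le> C * h y"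
    using shift[OF r z] by blast
  have "threshold_negligible h \<kappa> (\<lambda>y. L * h y)"
    using threshold_negligible_multiple_h[OF star L C(1) pairs _ pos] z K C(2)
    unfolding mult.assoc by blast
  moreover have "\<forall>\<^sub>F y in at_top. 0 \<le> L * h y"
    using assms(5) by eventually_elim (use L in simp)
  ultimately show ?thesis
    by (intro exI[of _ "\<lambda>y. L * h y"]) simp
qed

end

section \<open>Weighted sums under abstract tail conditions\<close>

text \<open>The consequences of (A), (B) and (C) that the asymptotic argument uses.\<close>
locale tail_conditions = order_statistics +
  fixes h :: "real \<Rightarrow> real"
  assumes max_tail_pos: "\<forall>\<^sub>F y in at_top. 0 < max_tail y"
    and h_pos: "\<forall>\<^sub>F y in at_top. 0 < h y"
    and h_sublinear: "\<exists>t>0. \<forall>\<^sub>F y in at_top. t * h y \<le> y"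
    and max_tail_shift: "\<And>\<epsilon>. 0 < \<epsilon> \<Longrightarrow> \<exists>\<eta>>0. \<forall>\<^sub>F y in at_top.
      max_tail (y - \<eta> * h y) \<le> (1 + \<epsilon>) * max_tail y \<and> (1 - \<epsilon>) * max_tail y \<le> max_tail (y + \<eta> * h y)"
    and star: "star_condition h"
    and threshold: "\<And>\<kappa>. 0 < \<kappa> \<Longrightarrow> \<exists>g. (\<forall>\<^sub>F y in at_top. 0 \<le> g y) \<and> threshold_negligible h \<kappa> g"
begin

lemma marginal_tail_sum_eventually_le:
  assumes "0 < e"
  shows "\<forall>\<^sub>F y in at_top. marginal_tail_sum y \<le> (1 + e) * max_tail y"
proof -
  obtain t where t: "0 < t" "\<forall>\<^sub>F y in at_top. t * h y \<le> y"
    using h_sublinear by blast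
  define D where "D y = (\<Sum>i=1..n. \<Sum>j\<in>{1..n}-{i}.
    prob {w \<in> space M. \<bar>X i w\<bar> > t * h y \<and> X j w > y})" for y
  have "tail_negligible D"
    unfolding D_def using star t(1)
    by (intro tail_negligible_sum) (auto simp: star_condition_def)
  then have "\<forall>\<^sub>F y in at_top. D y \<le> e * max_tail y"
    using max_tail_pos assms by (rule tail_negligible_eventually_le)
  with t(2) show ?thesis
  proof eventually_elim
    case (elim y)
    have "(\<Sum>i=1..n. \<Sum>j\<in>{1..n}-{i}. prob {w \<in> space M. y < X i w \<and> y < X j w}) \<le> D y"
      unfolding D_def
    proof (intro sum_mono finite_measure_mono)
      fix i j assume "i \<in> {1..n}" "j \<in> {1..n}-{i}"
      then have "i \<in> {1..n}" "j \<in> {1..n}"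
        by auto
      then show "{w \<in> space M. \<bar>X i w\<bar> > t * h y \<and> X j w > y} \<in> events"
        by measurable
    qed (use elim(1) in auto)
    then show ?case
      using marginal_tail_sum_le[of y] elim(2) by (simp add: algebra_simps)
  qed
qed

lemma weighted_ordstat_tail_le:
  assumes "0 < a" "0 \<le> d" "0 < \<epsilon>"
  shows "\<forall>\<^sub>F y in at_top. \<forall>c. a \<le> c 0 \<longrightarrow> (\<forall>i\<in>{1..<n}. 0 \<le> c i \<and> c i \<le> d) \<longrightarrow>
    prob {w \<in> space M. c 0 * y < (\<Sum>i<n. c i * ordstat X n (n - i) w)} \<le> (1 + \<epsilon>) * max_tail y"
proof -
  define \<kappa> where "\<kappa> = d / a + 1"
  have \<kappa>: "0 < \<kappa>" "\<And>c0. a \<le> c0 \<Longrightarrow> d \<le> c0 * \<kappa>"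
    using le_mult_div_add_one assms(1,2) by (auto simp: \<kappa>_def add_nonneg_pos)
  obtain \<eta> where \<eta>: "0 < \<eta>"
    and shift: "\<forall>\<^sub>F y in at_top. max_tail (y - \<eta> * h y) \<le> (1 + \<epsilon> / 2) * max_tail y \<and>
      (1 - \<epsilon> / 2) * max_tail y \<le> max_tail (y + \<eta> * h y)"
    using max_tail_shift[of "\<epsilon> / 2"] assms(3) by auto
  obtain g where g0: "\<forall>\<^sub>F y in at_top. 0 \<le> g y" and g: "threshold_negligible h (\<kappa> * n) g"
    using threshold[of "\<kappa> * n"] \<kappa>(1) one_le_n by auto
  define A where "A y i j = {w \<in> space M. g y < X i w \<and> g y < X j w} \<union>
    {w \<in> space M. \<eta> * h y / (\<kappa> * n) < \<bar>X i w\<bar> \<and> y - \<kappa> * n * g y < X j w}" for y i j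
  define Q where "Q y = (\<Sum>i=1..n. \<Sum>j\<in>{1..n}-{i}.
    prob {w \<in> space M. g y < X i w \<and> g y < X j w} +
    prob {w \<in> space M. \<eta> / (\<kappa> * n) * h y < \<bar>X i w\<bar> \<and> y - \<kappa> * n * g y < X j w})" for y
  have "tail_negligible Q"
    unfolding Q_def
  proof (intro tail_negligible_sum tail_negligible_add)
    fix i j assume "i \<in> {1..n}" "j \<in> {1..n}-{i}"
    then have ij: "i \<in> {1..n}" "j \<in> {1..n}" "i \<noteq> j"
      by auto
    have pos: "0 < \<eta> / (\<kappa> * n)"
      using \<eta> \<kappa>(1) one_le_n by simp
    have G: "tail_negligible (\<lambda>y. prob {w \<in> space M. g y < X i w \<and> g y < X j w}) \<and>
      (\<forall>\<sigma>>0. tail_negligible (\<lambda>y. prob {w \<in> space M.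
        \<sigma> * h y < \<bar>X i w\<bar> \<and> y - \<kappa> * n * g y < X j w}))"
      using g ij unfolding threshold_negligible_def by blast
    then show "tail_negligible (\<lambda>y. prob {w \<in> space M. g y < X i w \<and> g y < X j w})"
      by (rule conjunct1)
    show "tail_negligible (\<lambda>y. prob {w \<in> space M.
        \<eta> / (\<kappa> * n) * h y < \<bar>X i w\<bar> \<and> y - \<kappa> * n * g y < X j w})"
      using conjunct2[OF G, rule_format, OF pos] .
  qed
  then have "\<forall>\<^sub>F y in at_top. Q y \<le> \<epsilon> / 2 * max_tail y"
    using max_tail_pos by (rule tail_negligible_eventually_le) (use assms(3) in simp)
  with shift h_pos g0 show ?thesis
  proof eventually_elim
    case (elim y)
    show ?case
    proof (intro allI impI)
      fix c :: "nat \<Rightarrow> real" assume c0: "a \<le> c 0" and c: "\<forall>i\<in>{1..<n}. 0 \<le> c i \<and> c i \<le> d"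
      have "prob {w \<in> space M. c 0 * y < (\<Sum>i<n. c i * ordstat X n (n - i) w)} \<le>
          max_tail (y - \<eta> * h y) + (\<Sum>i=1..n. \<Sum>j\<in>{1..n}-{i}. prob (A y i j))"
        unfolding max_tail_def A_def
        using weighted_ordstat_event_subset[OF _ c \<kappa>(2)[OF c0] \<kappa>(1) elim(3), of "\<eta> * h y" y]
          assms(1) c0 \<eta> elim(2)
        by (intro prob_le_prob_plus_pairs) (auto intro: less_le_trans)
      also have "(\<Sum>i=1..n. \<Sum>j\<in>{1..n}-{i}. prob (A y i j)) \<le> Q y"
        unfolding Q_def A_def
        by (intro sum_mono measure_Un_le[THEN order_trans]) (auto simp: mult.commute)
      finally show "prob {w \<in> space M. c 0 * y < (\<Sum>i<n. c i * ordstat X n (n - i) w)} \<le>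
          (1 + \<epsilon>) * max_tail y"
        using elim(1,4) by (simp add: algebra_simps)
    qed
  qed
qed

lemma weighted_ordstat_tail_ge:
  assumes "0 < a" "0 \<le> d" "0 < \<epsilon>"
  shows "\<forall>\<^sub>F y in at_top. \<forall>c. a \<le> c 0 \<longrightarrow> (\<forall>i\<in>{1..<n}. 0 \<le> c i \<and> c i \<le> d) \<longrightarrow>
    (1 - \<epsilon>) * max_tail y \<le> prob {w \<in> space M. c 0 * y < (\<Sum>i<n. c i * ordstat X n (n - i) w)}"
proof -
  define \<kappa> where "\<kappa> = d / a + 1"
  have \<kappa>: "0 < \<kappa>" "\<And>c0. a \<le> c0 \<Longrightarrow> d \<le> c0 * \<kappa>"
    using le_mult_div_add_one assms(1,2) by (auto simp: \<kappa>_def add_nonneg_pos)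
  obtain \<eta> where \<eta>: "0 < \<eta>"
    and shift: "\<forall>\<^sub>F y in at_top. max_tail (y - \<eta> * h y) \<le> (1 + \<epsilon> / 2) * max_tail y \<and>
      (1 - \<epsilon> / 2) * max_tail y \<le> max_tail (y + \<eta> * h y)"
    using max_tail_shift[of "\<epsilon> / 2"] assms(3) by auto
  define R where "R y = (\<Sum>i=1..n. \<Sum>j\<in>{1..n}-{i}.
    prob {w \<in> space M. \<eta> * h y / (\<kappa> * n) < \<bar>X i w\<bar> \<and> y < X j w})" for y
  have "tail_negligible R"
    unfolding R_def
  proof (intro tail_negligible_sum)
    fix i j assume "i \<in> {1..n}" "j \<in> {1..n}-{i}"
    then have ij: "i \<in> {1..n}" "j \<in> {1..n}" "i \<noteq> j"
      by auto
    have "0 < \<eta> / (\<kappa> * n)"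
      using \<eta> \<kappa>(1) one_le_n by simp
    from star[unfolded star_condition_def, rule_format, OF ij this]
    show "tail_negligible (\<lambda>y. prob {w \<in> space M. \<eta> * h y / (\<kappa> * n) < \<bar>X i w\<bar> \<and> y < X j w})"
      by simp
  qed
  then have "\<forall>\<^sub>F y in at_top. R y \<le> \<epsilon> / 2 * max_tail y"
    using max_tail_pos by (rule tail_negligible_eventually_le) (use assms(3) in simp)
  with shift h_pos show ?thesis
  proof eventually_elim
    case (elim y)
    show ?case
    proof (intro allI impI)
      fix c :: "nat \<Rightarrow> real" assume c0: "a \<le> c 0" and c: "\<forall>i\<in>{1..<n}. 0 \<le> c i \<and> c i \<le> d"
      have "max_tail (y + \<eta> * h y) \<le>
          prob {w \<in> space M. c 0 * y < (\<Sum>i<n. c i * ordstat X n (n - i) w)} + R y"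
        unfolding max_tail_def R_def
        using max_ordstat_event_subset[OF _ c \<kappa>(2)[OF c0] \<kappa>(1), of "\<eta> * h y" y]
          assms(1) c0 \<eta> elim(2)
        by (intro prob_le_prob_plus_pairs) (auto intro: less_le_trans)
      then show "(1 - \<epsilon>) * max_tail y \<le>
          prob {w \<in> space M. c 0 * y < (\<Sum>i<n. c i * ordstat X n (n - i) w)}"
        using elim(1,3) by (simp add: algebra_simps)
    qed
  qed
qed

lemma weighted_ordstat_tail_equivalence:
  assumes "0 < a" "0 \<le> d" "0 < \<epsilon>"
  shows "\<forall>\<^sub>F x in at_top. \<forall>c. c 0 \<in> {a..b} \<and> (\<forall>i\<in>{1..n-1}. c i \<in> {0..d}) \<longrightarrow>
    \<bar>prob {w \<in> space M. (\<Sum>i<n. c i * ordstat X n (n - i) w) > x} /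
      prob {w \<in> space M. c 0 * ordstat X n n w > x} - 1\<bar> < \<epsilon> \<and>
    \<bar>prob {w \<in> space M. c 0 * ordstat X n n w > x} /
      (\<Sum>i=1..n. prob {w \<in> space M. c 0 * X i w > x}) - 1\<bar> < \<epsilon> \<and>
    \<bar>prob {w \<in> space M. (\<Sum>i<n. c i * ordstat X n (n - i) w) > x} /
      (\<Sum>i=1..n. prob {w \<in> space M. c 0 * X i w > x}) - 1\<bar> < \<epsilon>"
proof -
  define e where "e = \<epsilon> / 4"
  have e: "0 < e"
    using assms(3) by (simp add: e_def)
  define P where "P c y = prob {w \<in> space M. c 0 * y < (\<Sum>i<n. c i * ordstat X n (n - i) w)}"
    for c :: "nat \<Rightarrow> real" and y
  have "\<forall>\<^sub>F y in at_top. 0 < max_tail y \<and> marginal_tail_sum y \<le> (1 + e) * max_tail y \<and>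
    (\<forall>c. a \<le> c 0 \<longrightarrow> (\<forall>i\<in>{1..<n}. 0 \<le> c i \<and> c i \<le> d) \<longrightarrow>
      (1 - e) * max_tail y \<le> P c y \<and> P c y \<le> (1 + e) * max_tail y)"
    using max_tail_pos marginal_tail_sum_eventually_le[OF e]
      weighted_ordstat_tail_le[OF assms(1,2) e] weighted_ordstat_tail_ge[OF assms(1,2) e]
    unfolding P_def by eventually_elim blast
  then have "\<forall>\<^sub>F x in at_top. \<forall>c0\<in>{a..b}. 0 < max_tail (x / c0) \<and>
    marginal_tail_sum (x / c0) \<le> (1 + e) * max_tail (x / c0) \<and>
    (\<forall>c. a \<le> c 0 \<longrightarrow> (\<forall>i\<in>{1..<n}. 0 \<le> c i \<and> c i \<le> d) \<longrightarrow>
      (1 - e) * max_tail (x / c0) \<le> P c (x / c0) \<and> P c (x / c0) \<le> (1 + e) * max_tail (x / c0))"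
    by (rule eventually_at_top_divide_uniform[OF assms(1)])
  then show ?thesis
  proof eventually_elim
    case (elim x)
    show ?case
    proof (intro allI impI)
      fix c :: "nat \<Rightarrow> real" assume c: "c 0 \<in> {a..b} \<and> (\<forall>i\<in>{1..n-1}. c i \<in> {0..d})"
      define y where "y = x / c 0"
      have c0: "0 < c 0" "a \<le> c 0"
        using c assms(1) by auto
      then have x: "x = c 0 * y"
        by (simp add: y_def)
      have "\<forall>i\<in>{1..<n}. 0 \<le> c i \<and> c i \<le> d"
        using c by auto
      then have bounds: "0 < max_tail y" "marginal_tail_sum y \<le> (1 + e) * max_tail y"
        "(1 - e) * max_tail y \<le> P c y" "P c y \<le> (1 + e) * max_tail y"
        using elim c c0 unfolding y_def by auto
      have "prob {w \<in> space M. c 0 * ordstat X n n w > x} = max_tail y"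
        unfolding max_tail_def x using c0 by simp
      moreover have "(\<Sum>i=1..n. prob {w \<in> space M. c 0 * X i w > x}) = marginal_tail_sum y"
        unfolding marginal_tail_sum_def x using c0 by simp
      moreover have "prob {w \<in> space M. (\<Sum>i<n. c i * ordstat X n (n - i) w) > x} = P c y"
        unfolding P_def x ..
      ultimately show "\<bar>prob {w \<in> space M. (\<Sum>i<n. c i * ordstat X n (n - i) w) > x} /
          prob {w \<in> space M. c 0 * ordstat X n n w > x} - 1\<bar> < \<epsilon> \<and>
        \<bar>prob {w \<in> space M. c 0 * ordstat X n n w > x} /
          (\<Sum>i=1..n. prob {w \<in> space M. c 0 * X i w > x}) - 1\<bar> < \<epsilon> \<and>
        \<bar>prob {w \<in> space M. (\<Sum>i<n. c i * ordstat X n (n - i) w) > x} /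
          (\<Sum>i=1..n. prob {w \<in> space M. c 0 * X i w > x}) - 1\<bar> < \<epsilon>"
        using ratios_close_to_one[OF bounds(1) e bounds(3,4) max_tail_le_marginal_tail_sum bounds(2)]
        by (simp add: e_def)
    qed
  qed
qed

end

section \<open>The three sets of hypotheses\<close>

context order_statistics
begin

lemma gumbel_h_sublinear:
  assumes pos: "\<And>x. 0 < max_tail x"
    and gumbel: "\<And>s. ((\<lambda>x. max_tail (x + s * h x) / max_tail x) \<longlongrightarrow> exp (- s)) at_top"
    and "0 < \<tau>"
  shows "\<forall>\<^sub>F y in at_top. \<tau> * h y < y"
proof -
  have "\<forall>\<^sub>F y in at_top. max_tail (y + (- \<tau>) * h y) / max_tail y < exp \<tau> + 1"
    using order_tendstoD(2)[OF gumbel[of "- \<tau>"]] by simp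
  moreover have "\<forall>\<^sub>F y in at_top. max_tail y < max_tail 0 / (exp \<tau> + 1)"
    using order_tendstoD(2)[OF max_tail_tendsto_0] pos[of 0] by (simp add: add_pos_pos)
  ultimately show ?thesis
  proof eventually_elim
    case (elim y)
    show ?case
    proof (rule ccontr)
      assume "\<not> \<tau> * h y < y"
      then have "max_tail 0 \<le> max_tail (y + (- \<tau>) * h y)"
        by (intro max_tail_antimono) simp
      moreover have "max_tail (y + (- \<tau>) * h y) < (exp \<tau> + 1) * max_tail y"
        using elim(1) pos[of y] by (simp add: divide_less_eq)
      moreover have "0 < exp \<tau> + 1"
        by (simp add: add_pos_pos)
      then have "(exp \<tau> + 1) * max_tail y < max_tail 0"
        using elim(2) by (simp add: pos_less_divide_eq mult.commute)
      ultimately show False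
        by linarith
    qed
  qed
qed

lemma gumbel_h_shift_le:
  assumes pos: "\<And>x. 0 < max_tail x"
    and gumbel: "\<And>s. ((\<lambda>x. max_tail (x + s * h x) / max_tail x) \<longlongrightarrow> exp (- s)) at_top"
    and "0 < r" "\<And>x. 0 < h x" and z: "filterlim (\<lambda>y. y - r * h y) at_top at_top"
  shows "\<forall>\<^sub>F y in at_top. h (y - r * h y) \<le> (r + 3) * h y"
proof -
  define z where "z y = y - r * h y" for y
  \<comment> \<open>if h (z y) > (r + 3) h y, the Gumbel ratio at z y for s = 1 is at most the one at y for s = 3\<close>
  have "exp (- 3 :: real) < exp (- 1) / 2"
  proof -
    have "3 \<le> exp (2 :: real)"
      using exp_ge_add_one_self[of 2] by simp
    moreover have "exp (- 1 :: real) = exp 2 * exp (- 3)"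
      by (simp add: exp_add[symmetric])
    ultimately show ?thesis
      by simp
  qed
  from order_tendstoD(2)[OF gumbel[of 3] this]
  have "\<forall>\<^sub>F y in at_top. max_tail (y + 3 * h y) / max_tail y < exp (- 1) / 2" .
  moreover have "((\<lambda>y. max_tail (z y + 1 * h (z y)) / max_tail (z y)) \<longlongrightarrow> exp (- 1)) at_top"
    using filterlim_compose[OF gumbel[of 1] z] by (simp add: z_def)
  then have "\<forall>\<^sub>F y in at_top. exp (- 1) / 2 < max_tail (z y + 1 * h (z y)) / max_tail (z y)"
    by (rule order_tendstoD) simp
  ultimately have "\<forall>\<^sub>F y in at_top. h (z y) \<le> (r + 3) * h y"
  proof eventually_elim
    case (elim y)
    show ?case
    proof (rule ccontr)
      assume "\<not> h (z y) \<le> (r + 3) * h y"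
      then have "max_tail (z y + 1 * h (z y)) \<le> max_tail (y + 3 * h y)"
        by (intro max_tail_antimono) (simp add: z_def algebra_simps)
      moreover have "max_tail y \<le> max_tail (z y)"
        using assms(3) assms(4)[of y] by (intro max_tail_antimono) (simp add: z_def)
      ultimately have "max_tail (z y + 1 * h (z y)) / max_tail (z y) \<le> max_tail (y + 3 * h y) / max_tail y"
        using pos by (intro frac_le) (auto intro: less_imp_le)
      with elim show False
        by linarith
    qed
  qed
  then show ?thesis
    by (simp add: z_def)
qed

lemma gumbel_max_tail_shift:
  assumes pos: "\<And>x. 0 < max_tail x"
    and gumbel: "\<And>s. ((\<lambda>x. max_tail (x + s * h x) / max_tail x) \<longlongrightarrow> exp (- s)) at_top"
    and "0 < \<epsilon>"
  shows "\<exists>\<eta>>0. \<forall>\<^sub>F y in at_top. max_tail (y - \<eta> * h y) \<le> (1 + \<epsilon>) * max_tail y \<and>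
    (1 - \<epsilon>) * max_tail y \<le> max_tail (y + \<eta> * h y)"
proof -
  define \<eta> where "\<eta> = ln (1 + \<epsilon> / 2)"
  have \<eta>: "0 < \<eta>" "exp \<eta> = 1 + \<epsilon> / 2"
    using assms(3) by (simp_all add: \<eta>_def)
  have "(1 - \<epsilon>) * (1 + \<epsilon> / 2) < 1"
    using assms(3) by (simp add: algebra_simps power2_eq_square) (smt (verit) mult_pos_pos)
  then have "1 - \<epsilon> < exp (- \<eta>)"
    using \<eta> assms(3) by (simp add: exp_minus inverse_eq_divide less_divide_eq)
  then have "\<forall>\<^sub>F y in at_top. max_tail (y - \<eta> * h y) \<le> (1 + \<epsilon>) * max_tail y \<and>
      (1 - \<epsilon>) * max_tail y \<le> max_tail (y + \<eta> * h y)"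
    using \<eta> assms(3) pos
    by (intro max_tail_shift_of_tendsto[OF gumbel _ gumbel]) auto
  with \<eta> show ?thesis
    by blast
qed

lemma tail_conditions_gumbel:
  assumes "upper_endpoint max_cdf = \<infinity>" "GMDA max_cdf h" "\<And>x. 0 < h x"
    and "star_condition h" "starstar_condition h"
  shows "tail_conditions M X n h"
proof -
  have pos: "\<And>x. 0 < max_tail x"
    using max_tail_pos_of_upper_endpoint[OF assms(1)] .
  have gumbel: "\<And>s. ((\<lambda>x. max_tail (x + s * h x) / max_tail x) \<longlongrightarrow> exp (- s)) at_top"
    using assms(1,2) by (simp add: GMDA_def one_minus_max_cdf)
  note sub = gumbel_h_sublinear[OF pos gumbel]
  show ?thesis
  proof unfold_locales
    show "\<forall>\<^sub>F y in at_top. 0 < max_tail y" "\<forall>\<^sub>F y in at_top. 0 < h y"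
      using pos assms(3) by simp_all
    show "\<exists>t>0. \<forall>\<^sub>F y in at_top. t * h y \<le> y"
      using sub[of 1] by (intro exI[of _ 1]) (auto elim: eventually_mono)
    show "star_condition h"
      by (fact assms(4))
  next
    fix \<epsilon> :: real assume "0 < \<epsilon>"
    then show "\<exists>\<eta>>0. \<forall>\<^sub>F y in at_top. max_tail (y - \<eta> * h y) \<le> (1 + \<epsilon>) * max_tail y \<and>
        (1 - \<epsilon>) * max_tail y \<le> max_tail (y + \<eta> * h y)"
      by (rule gumbel_max_tail_shift[OF pos gumbel])
  next
    fix \<kappa> :: real assume "0 < \<kappa>"
    show "\<exists>g. (\<forall>\<^sub>F y in at_top. 0 \<le> g y) \<and> threshold_negligible h \<kappa> g"
    proof (rule threshold_negligible_of_starstar[OF assms(4,5) \<open>0 < \<kappa>\<close> _ _ sub])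
      fix r :: real assume "0 < r"
      have "\<forall>\<^sub>F y in at_top. max_tail (y + (- r) * h y) / max_tail y < exp r + 1"
        using order_tendstoD(2)[OF gumbel[of "- r"]] by simp
      then show "\<exists>K. \<forall>\<^sub>F y in at_top. max_tail (y - r * h y) \<le> K * max_tail y"
        using pos by (intro exI[of _ "exp r + 1"]) (auto simp: divide_less_eq elim: eventually_mono)
      assume "filterlim (\<lambda>y. y - r * h y) at_top at_top"
      then show "\<exists>C>0. \<forall>\<^sub>F y in at_top. h (y - r * h y) \<le> C * h y"
        using gumbel_h_shift_le[OF pos gumbel \<open>0 < r\<close> assms(3)] \<open>0 < r\<close>
        by (intro exI[of _ "r + 3"]) auto
    qed (use pos assms(3) in simp_all)
  qed
qed

lemma H_class_properties:
  assumes "long_tailed max_cdf" "h \<in> H_class max_cdf"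
  shows "\<forall>\<^sub>F y in at_top. 0 < max_tail y" and "\<forall>\<^sub>F y in at_top. 0 < h y"
    and "\<And>\<tau>. 0 < \<tau> \<Longrightarrow> \<forall>\<^sub>F y in at_top. \<tau> * h y < y"
    and "\<And>s. ((\<lambda>x. max_tail (x + s * h x) / max_tail x) \<longlongrightarrow> 1) at_top"
    and "\<And>s. \<exists>C>0. \<forall>\<^sub>F x in at_top. h (x + s * h x) \<le> C * h x"
proof -
  show "\<forall>\<^sub>F y in at_top. 0 < max_tail y"
    using assms(1) unfolding long_tailed_def eventually_at_top_linorder
    by (auto simp: one_minus_max_cdf)
  show hpos: "\<forall>\<^sub>F y in at_top. 0 < h y"
    using assms(2) by (simp add: H_class_def)
  show "\<forall>\<^sub>F y in at_top. \<tau> * h y < y" if "0 < \<tau>" for \<tau>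
    using assms(2) that by (intro eventually_scaled_less_of_sublinear) (simp_all add: H_class_def)
  show "((\<lambda>x. max_tail (x + s * h x) / max_tail x) \<longlongrightarrow> 1) at_top" for s
    using assms(2) by (simp add: H_class_def one_minus_max_cdf)
  show "\<exists>C>0. \<forall>\<^sub>F x in at_top. h (x + s * h x) \<le> C * h x" for s
  proof -
    have "Limsup at_top (\<lambda>x. ereal (h (x + s * h x) / h x)) < \<infinity>"
      using assms(2) by (simp add: H_class_def)
    then obtain C where "0 < C" "\<forall>\<^sub>F x in at_top. h (x + s * h x) / h x < C"
      by (rule Limsup_less_infinity_eventually_less)
    moreover from this(2) hpos have "\<forall>\<^sub>F x in at_top. h (x + s * h x) \<le> C * h x"
      by eventually_elim (simp add: divide_less_eq)
    ultimately show ?thesis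
      by blast
  qed
qed

lemma tail_conditions_H_class:
  assumes "long_tailed max_cdf" "h \<in> H_class max_cdf" "star_condition h"
    and "\<And>\<kappa>. 0 < \<kappa> \<Longrightarrow> \<exists>g. (\<forall>\<^sub>F y in at_top. 0 \<le> g y) \<and> threshold_negligible h \<kappa> g"
  shows "tail_conditions M X n h"
proof unfold_locales
  note H = H_class_properties[OF assms(1,2)]
  show "\<forall>\<^sub>F y in at_top. 0 < max_tail y" "\<forall>\<^sub>F y in at_top. 0 < h y"
    by (fact H(1,2))+
  show "\<exists>t>0. \<forall>\<^sub>F y in at_top. t * h y \<le> y"
    using H(3)[of 1] by (intro exI[of _ 1]) (auto elim: eventually_mono)
  show "\<exists>\<eta>>0. \<forall>\<^sub>F y in at_top. max_tail (y - \<eta> * h y) \<le> (1 + \<epsilon>) * max_tail y \<and>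
      (1 - \<epsilon>) * max_tail y \<le> max_tail (y + \<eta> * h y)" if "0 < \<epsilon>" for \<epsilon>
  proof -
    have "\<forall>\<^sub>F y in at_top. max_tail (y - 1 * h y) \<le> (1 + \<epsilon>) * max_tail y \<and>
        (1 - \<epsilon>) * max_tail y \<le> max_tail (y + 1 * h y)"
      using that by (intro max_tail_shift_of_tendsto[OF H(4)[of "- 1"] _ H(4)[of 1] _ H(1)]) auto
    then show ?thesis
      by (intro exI[of _ 1]) simp
  qed
qed (fact assms(3,4))+

lemma max_tail_dominated:
  assumes "class_D max_cdf" "\<forall>\<^sub>F y in at_top. 0 < max_tail y" "0 < \<delta>"
  obtains K where "\<forall>\<^sub>F y in at_top. max_tail (\<delta> * y) \<le> K * max_tail y"
proof -
  have "\<forall>y>0. 0 < Liminf at_top (\<lambda>x. ereal (max_tail (x * y) / max_tail x))"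
    using assms(1) by (simp add: class_D_def dominatedly_varying_def one_minus_max_cdf)
  moreover have "0 < 1 / \<delta>"
    using assms(3) by simp
  ultimately have "0 < Liminf at_top (\<lambda>x. ereal (max_tail (x * (1 / \<delta>)) / max_tail x))"
    by blast
  then obtain c where c: "0 < c" "\<forall>\<^sub>F x in at_top. c < max_tail (x * (1 / \<delta>)) / max_tail x"
    by (rule Liminf_pos_eventually_greater)
  have "\<forall>\<^sub>F y in at_top. c < max_tail y / max_tail (\<delta> * y)"
    using eventually_compose_filterlim[OF c(2) filterlim_scaled_at_top[OF assms(3)]] assms(3)
    by simp
  moreover have "\<forall>\<^sub>F y in at_top. 0 < max_tail (\<delta> * y)"
    using eventually_compose_filterlim[OF assms(2) filterlim_scaled_at_top[OF assms(3)]] .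
  ultimately have "\<forall>\<^sub>F y in at_top. max_tail (\<delta> * y) \<le> 1 / c * max_tail y"
    by eventually_elim (use c(1) in \<open>simp add: less_divide_eq field_simps\<close>)
  then show ?thesis
    by (rule that)
qed

lemma threshold_negligible_linear:
  assumes D: "class_D max_cdf" and "dominatedly_varying h" and star: "star_condition h" "0 < \<kappa>"
    and pos: "\<forall>\<^sub>F y in at_top. 0 < max_tail y" and hpos: "\<forall>\<^sub>F y in at_top. 0 < h y"
    and sub: "\<forall>\<^sub>F y in at_top. h y < y"
  shows "threshold_negligible h \<kappa> (\<lambda>y. 1 / (2 * \<kappa>) * y)"
  unfolding threshold_negligible_def
proof (intro ballI impI conjI allI)
  let ?\<delta> = "1 / (2 * \<kappa>)"
  have \<delta>: "0 < ?\<delta>"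
    using assms(4) by simp
  fix i j assume ij: "i \<in> {1..n}" "j \<in> {1..n}" "i \<noteq> j"
  obtain K1 where K1: "\<forall>\<^sub>F y in at_top. max_tail (?\<delta> * y) \<le> K1 * max_tail y"
    using max_tail_dominated[OF D pos \<delta>] .
  have small: "\<forall>\<^sub>F y in at_top. h (?\<delta> * y) < ?\<delta> * y"
    using eventually_compose_filterlim[OF sub filterlim_scaled_at_top[OF \<delta>]] .
  have "tail_negligible (\<lambda>x. prob {w \<in> space M. \<bar>X i w\<bar> > 1 * h x \<and> X j w > x})"
    using star(1)[unfolded star_condition_def, rule_format, OF ij zero_less_one] .
  then show "tail_negligible (\<lambda>y. prob {w \<in> space M. ?\<delta> * y < X i w \<and> ?\<delta> * y < X j w})"
  proof (rule tail_negligible_compose[OF _ filterlim_scaled_at_top[OF \<delta>] pos K1])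
    show "\<forall>\<^sub>F y in at_top. 0 \<le> prob {w \<in> space M. ?\<delta> * y < X i w \<and> ?\<delta> * y < X j w} \<and>
        prob {w \<in> space M. ?\<delta> * y < X i w \<and> ?\<delta> * y < X j w} \<le>
        prob {w \<in> space M. \<bar>X i w\<bar> > 1 * h (?\<delta> * y) \<and> X j w > ?\<delta> * y}"
      using small by eventually_elim (use ij in \<open>auto intro!: finite_measure_mono\<close>)
  qed
  fix \<sigma> :: real assume "0 < \<sigma>"
  obtain K2 where K2: "\<forall>\<^sub>F y in at_top. max_tail (1 / 2 * y) \<le> K2 * max_tail y"
    using max_tail_dominated[OF D pos, of "1 / 2"] by auto
  have "\<forall>y>0. Limsup at_top (\<lambda>x. ereal (h (x * y) / h x)) < \<infinity>"
    using assms(2) unfolding dominatedly_varying_def by blast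
  then have "Limsup at_top (\<lambda>x. ereal (h (x * (1 / 2)) / h x)) < \<infinity>"
    by (rule allE[of _ "1 / 2"]) simp
  then obtain C where C: "0 < C" "\<forall>\<^sub>F x in at_top. h (x * (1 / 2)) / h x < C"
    by (rule Limsup_less_infinity_eventually_less)
  from C(2) hpos have "\<forall>\<^sub>F y in at_top. h (1 / 2 * y) \<le> C * h y"
    by eventually_elim (simp add: divide_less_eq mult.commute)
  moreover have "filterlim (\<lambda>y::real. 1 / 2 * y) at_top at_top"
    by (rule filterlim_scaled_at_top) simp
  ultimately have "tail_negligible (\<lambda>y. prob {w \<in> space M. \<sigma> * h y < \<bar>X i w\<bar> \<and> 1 / 2 * y < X j w})"
    using star_condition_shift[OF star(1) ij \<open>0 < \<sigma>\<close> C(1) _ pos K2] by blast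
  moreover have "y - \<kappa> * (?\<delta> * y) = 1 / 2 * y" for y
    using assms(4) by (simp add: field_simps)
  ultimately show "tail_negligible (\<lambda>y. prob {w \<in> space M. \<sigma> * h y < \<bar>X i w\<bar> \<and> y - \<kappa> * (?\<delta> * y) < X j w})"
    by (simp only:)
qed

lemma tail_conditions_long_tailed:
  assumes "long_tailed max_cdf" "h \<in> H_class max_cdf" "star_condition h" "starstar_condition h"
  shows "tail_conditions M X n h"
proof (rule tail_conditions_H_class[OF assms(1-3)])
  note H = H_class_properties[OF assms(1,2)]
  fix \<kappa> :: real assume "0 < \<kappa>"
  show "\<exists>g. (\<forall>\<^sub>F y in at_top. 0 \<le> g y) \<and> threshold_negligible h \<kappa> g"
  proof (rule threshold_negligible_of_starstar[OF assms(3,4) \<open>0 < \<kappa>\<close> H(1,2,3)])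
    fix r :: real assume "0 < r"
    have "\<forall>\<^sub>F y in at_top. max_tail (y + (- r) * h y) / max_tail y < 2"
      using order_tendstoD(2)[OF H(4)[of "- r"]] by simp
    with H(1) have "\<forall>\<^sub>F y in at_top. max_tail (y - r * h y) \<le> 2 * max_tail y"
      by eventually_elim (simp add: divide_less_eq)
    then show "\<exists>K. \<forall>\<^sub>F y in at_top. max_tail (y - r * h y) \<le> K * max_tail y"
      by blast
    show "\<exists>C>0. \<forall>\<^sub>F y in at_top. h (y - r * h y) \<le> C * h y"
      using H(5)[of "- r"] by simp
  qed
qed

lemma tail_conditions_dominated:
  assumes "long_tailed max_cdf" "class_D max_cdf" "h \<in> H_class max_cdf"
    and "dominatedly_varying h" "star_condition h"
  shows "tail_conditions M X n h"
proof (rule tail_conditions_H_class[OF assms(1,3,5)])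
  note H = H_class_properties[OF assms(1,3)]
  fix \<kappa> :: real assume "0 < \<kappa>"
  have "threshold_negligible h \<kappa> (\<lambda>y. 1 / (2 * \<kappa>) * y)"
    using H(3)[of 1] by (intro threshold_negligible_linear[OF assms(2,4,5) \<open>0 < \<kappa>\<close> H(1,2)]) simp
  moreover have "\<forall>\<^sub>F y in at_top. 0 \<le> 1 / (2 * \<kappa>) * y"
    using eventually_ge_at_top[of 0] by eventually_elim (use \<open>0 < \<kappa>\<close> in simp)
  ultimately show "\<exists>g. (\<forall>\<^sub>F y in at_top. 0 \<le> g y) \<and> threshold_negligible h \<kappa> g"
    by (intro exI[of _ "\<lambda>y. 1 / (2 * \<kappa>) * y"]) simp
qed

end

theorem theorem3p1:
  fixes M :: "'a measure" and X :: "nat \<Rightarrow> 'a \<Rightarrow> real" and n :: nat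
    and a b d :: real
  assumes "prob_space M"
    and "n \<ge> 2"
    and rv: "\<And>i. i \<in> {1..n} \<Longrightarrow> X i \<in> borel_measurable M"
    and cases:
      "let F = (\<lambda>x. measure M {w \<in> space M. ordstat X n n w \<le> x});
           Fbar = (\<lambda>x. measure M {w \<in> space M. ordstat X n n w > x});
           star = (\<lambda>h. \<forall>i\<in>{1..n}. \<forall>j\<in>{1..n}. i \<noteq> j \<longrightarrow> (\<forall>t>0.
              ((\<lambda>x. measure M {w \<in> space M. \<bar>X i w\<bar> > t * h x \<and> X j w > x} / Fbar x)
                 \<longlongrightarrow> 0) at_top));
           starstar = (\<lambda>h. \<exists>L>0. \<forall>i\<in>{1..n}. \<forall>j\<in>{1..n}. i < j \<longrightarrow>
              ((\<lambda>x. measure M {w \<in> space M. X i w > L * h x \<and> X j w > L * h x} / Fbar x)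
                 \<longlongrightarrow> 0) at_top)
       in (upper_endpoint F = \<infinity> \<and>
             (\<exists>h. (\<forall>x. h x > 0) \<and> GMDA F h \<and> star h \<and> starstar h))
        \<or> (long_tailed F \<and> (\<exists>h \<in> H_class F. star h \<and> starstar h))
        \<or> (long_tailed F \<and> class_D F \<and>
             (\<exists>h \<in> H_class F. dominatedly_varying h \<and> star h))"
    and "0 < a" and "a \<le> b" and "0 \<le> d"
  shows
    "let C = {c :: nat \<Rightarrow> real. c 0 \<in> {a..b} \<and> (\<forall>i\<in>{1..n-1}. c i \<in> {0..d})};
         P1 = (\<lambda>c x. measure M {w \<in> space M. (\<Sum>i<n. c i * ordstat X n (n - i) w) > x});
         P2 = (\<lambda>c x. measure M {w \<in> space M. c 0 * ordstat X n n w > x});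
         P3 = (\<lambda>c x. \<Sum>i=1..n. measure M {w \<in> space M. c 0 * X i w > x})
     in (\<forall>\<epsilon>>0. \<forall>\<^sub>F x in at_top. \<forall>c\<in>C. \<bar>P1 c x / P2 c x - 1\<bar> < \<epsilon>) \<and>
        (\<forall>\<epsilon>>0. \<forall>\<^sub>F x in at_top. \<forall>c\<in>C. \<bar>P2 c x / P3 c x - 1\<bar> < \<epsilon>) \<and>
        (\<forall>\<epsilon>>0. \<forall>\<^sub>F x in at_top. \<forall>c\<in>C. \<bar>P1 c x / P3 c x - 1\<bar> < \<epsilon>)"
proof -
  interpret order_statistics M X n
    by (rule order_statistics.intro[OF assms(1)], unfold_locales) (use assms(2) rv in auto)
  have "(upper_endpoint max_cdf = \<infinity> \<and>
          (\<exists>h. (\<forall>x. 0 < h x) \<and> GMDA max_cdf h \<and> star_condition h \<and> starstar_condition h))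
      \<or> (long_tailed max_cdf \<and> (\<exists>h\<in>H_class max_cdf. star_condition h \<and> starstar_condition h))
      \<or> (long_tailed max_cdf \<and> class_D max_cdf \<and>
          (\<exists>h\<in>H_class max_cdf. dominatedly_varying h \<and> star_condition h))"
    using cases unfolding Let_def star_condition_def starstar_condition_def tail_negligible_def
      max_tail_def max_cdf_def[abs_def] by simp
  then obtain h where "tail_conditions M X n h"
    using tail_conditions_gumbel tail_conditions_long_tailed tail_conditions_dominated by blast
  then interpret tail_conditions M X n h .
  show ?thesis
    unfolding Let_def
    by (intro conjI allI impI;
        erule weighted_ordstat_tail_equivalence[OF assms(5,7), THEN eventually_mono]; blast)
qed

end
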